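(* Let $f(r),\xi(r)$ be smooth functions on $r\ge1$ with $\xi=0$ on $[1,R]$ for some $R>1$, let $n\in\mathbb Z\setminus\{0\}$, and let $\phi_n$ be the solution (given by the Green function formula, decaying as $r\to\infty$) of $$\Big(\partial_r^2+\tfrac1r\partial_r-\tfrac{n^2}{r^2}\Big)\phi_n=\xi(r)\partial_rf(r),\qquad\phi_n(1)=0.$$ Then $$|n|\,\Big\|\frac{\phi_n(r)}r\Big\|_{L^\infty(1,\infty)}\lesssim\|\xi f\|_{L^\infty}+\|\xi'f\|_{L^1},$$ with a constant independent of $n$.
   Context: The decaying solution is $-2|n|\phi_n(r)=\int_1^r\frac{s^{1+|n|}-s^{1-|n|}}{r^{|n|}}F(s)ds+\int_r^\infty\big(s^{1-|n|}r^{|n|}-s^{1-|n|}r^{-|n|}\big)F(s)ds$ with $F=\xi\partial_rf$. *)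

theory Defs
  imports "HOL-Analysis.Analysis"
begin

definition smooth_on :: "(real \<Rightarrow> real) \<Rightarrow> real set \<Rightarrow> bool" where
  "smooth_on g S \<longleftrightarrow> (\<forall>k. \<forall>x\<in>S. ((deriv ^^ k) g) differentiable (at x))"

definition green_phi :: "int \<Rightarrow> (real \<Rightarrow> real) \<Rightarrow> (real \<Rightarrow> real) \<Rightarrow> real \<Rightarrow> real" where
  "green_phi n xi f r =
     (let m = real_of_int \<bar>n\<bar>; F = (\<lambda>s. xi s * deriv f s) in
      - (1 / (2 * m)) *
        (integral {1..r} (\<lambda>s. (s powr (1 + m) - s powr (1 - m)) / r powr m * F s)
       + integral {r..} (\<lambda>s. (s powr (1 - m) * r powr m - s powr (1 - m) * r powr (- m)) * F s)))"

end

theory Submission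
  imports Defs
begin

text \<open>Write \<open>F = xi f' = (xi f)' - xi' f\<close>. Both pieces of the Green formula integrate \<open>F\<close> against a
  nonnegative monotone kernel: \<open>s^(1+m) - s^(1-m) \<le> r^(1+m)\<close> on \<open>[1, r]\<close> and \<open>s^(1-m) \<le> r^(1-m)\<close>
  on \<open>[r, T]\<close>. Integrating by parts against \<open>(xi f)'\<close>, such an integral is at most the kernel's
  supremum times \<open>2 sup |xi f| + \<parallel>xi' f\<parallel>\<^sub>1\<close>, because the total variation of a monotone kernel is
  bounded by its supremum. The prefactors \<open>r^(-m)\<close> and \<open>r^m - r^(-m) \<le> r^m\<close> turn both bounds into
  \<open>r (2 sup |xi f| + \<parallel>xi' f\<parallel>\<^sub>1)\<close>, and the factor \<open>1/(2m)\<close> of the Green formula absorbs \<open>m\<close>.\<close>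

lemma integral_mult_by_parts:
  fixes K K' G g F :: "real \<Rightarrow> real"
  assumes "a \<le> b"
    and K_deriv: "\<And>x. x \<in> {a..b} \<Longrightarrow> (K has_real_derivative K' x) (at x)"
    and G_deriv: "\<And>x. x \<in> {a..b} \<Longrightarrow> (G has_real_derivative g x + F x) (at x)"
    and "continuous_on {a..b} K'" "continuous_on {a..b} g" "continuous_on {a..b} F"
  shows "integral {a..b} (\<lambda>s. K s * F s) = K b * G b - K a * G a
           - integral {a..b} (\<lambda>s. K' s * G s) - integral {a..b} (\<lambda>s. K s * g s)"
proof -
  have "continuous_on {a..b} K" "continuous_on {a..b} G"
    using K_deriv G_deriv by (meson DERIV_isCont continuous_at_imp_continuous_on)+
  then have int: "(\<lambda>s. K' s * G s) integrable_on {a..b}" "(\<lambda>s. K s * g s) integrable_on {a..b}"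
      "(\<lambda>s. K s * F s) integrable_on {a..b}"
    using assms by (auto intro!: integrable_continuous_interval continuous_intros)
  have "((\<lambda>s. K' s * G s + K s * g s + K s * F s) has_integral K b * G b - K a * G a) {a..b}"
  proof (rule fundamental_theorem_of_calculus[OF \<open>a \<le> b\<close>])
    fix x assume "x \<in> {a..b}"
    from DERIV_mult[OF K_deriv[OF this] G_deriv[OF this]]
    show "((\<lambda>s. K s * G s) has_vector_derivative K' x * G x + K x * g x + K x * F x) (at x within {a..b})"
      by (simp add: algebra_simps has_real_derivative_iff_has_vector_derivative[symmetric]
          has_field_derivative_at_within)
  qed
  then have "integral {a..b} (\<lambda>s. K' s * G s + K s * g s + K s * F s) = K b * G b - K a * G a"
    by (rule integral_unique)
  then show ?thesis
    using int by (simp add: integral_add integrable_add)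
qed

lemma integral_abs_derivative_of_constant_sign:
  fixes K K' :: "real \<Rightarrow> real"
  assumes "a \<le> b"
    and K_deriv: "\<And>x. x \<in> {a..b} \<Longrightarrow> (K has_real_derivative K' x) (at x)"
    and sign: "(\<forall>x\<in>{a..b}. 0 \<le> K' x) \<or> (\<forall>x\<in>{a..b}. K' x \<le> 0)"
  shows "integral {a..b} (\<lambda>s. \<bar>K' s\<bar>) = \<bar>K b - K a\<bar>"
proof -
  have FT: "(K' has_integral K b - K a) {a..b}"
    by (rule fundamental_theorem_of_calculus[OF \<open>a \<le> b\<close>])
       (use K_deriv in \<open>auto simp: has_real_derivative_iff_has_vector_derivative[symmetric]
          has_field_derivative_at_within\<close>)
  from sign show ?thesis
  proof
    assume nonneg: "\<forall>x\<in>{a..b}. 0 \<le> K' x"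
    then have "0 \<le> K b - K a"
      using FT by (metis has_integral_nonneg)
    moreover have "integral {a..b} (\<lambda>s. \<bar>K' s\<bar>) = integral {a..b} K'"
      using nonneg by (intro integral_cong) auto
    ultimately show ?thesis
      using FT by (simp add: integral_unique)
  next
    assume nonpos: "\<forall>x\<in>{a..b}. K' x \<le> 0"
    then have "K b - K a \<le> 0"
      using has_integral_le[OF FT has_integral_0] by blast
    moreover have "integral {a..b} (\<lambda>s. \<bar>K' s\<bar>) = integral {a..b} (\<lambda>s. - K' s)"
      using nonpos by (intro integral_cong) auto
    ultimately show ?thesis
      using FT by (simp add: integral_unique)
  qed
qed

lemma integral_monotone_kernel_bound:
  fixes K K' G g F :: "real \<Rightarrow> real"
  assumes "a \<le> b"
    and K_deriv: "\<And>x. x \<in> {a..b} \<Longrightarrow> (K has_real_derivative K' x) (at x)"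
    and G_deriv: "\<And>x. x \<in> {a..b} \<Longrightarrow> (G has_real_derivative g x + F x) (at x)"
    and cont: "continuous_on {a..b} K'" "continuous_on {a..b} g" "continuous_on {a..b} F"
    and sign: "(\<forall>x\<in>{a..b}. 0 \<le> K' x) \<or> (\<forall>x\<in>{a..b}. K' x \<le> 0)"
    and K_range: "\<And>x. x \<in> {a..b} \<Longrightarrow> 0 \<le> K x \<and> K x \<le> M"
    and G_bound: "\<And>x. x \<in> {a..b} \<Longrightarrow> \<bar>G x\<bar> \<le> S"
  shows "\<bar>integral {a..b} (\<lambda>s. K s * F s)\<bar> \<le> M * (2 * S + integral {a..b} (\<lambda>s. \<bar>g s\<bar>))"
proof -
  have "continuous_on {a..b} K" "continuous_on {a..b} G"
    using K_deriv G_deriv by (meson DERIV_isCont continuous_at_imp_continuous_on)+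
  then have int: "(\<lambda>s. K' s * G s) integrable_on {a..b}" "(\<lambda>s. K s * g s) integrable_on {a..b}"
    using cont by (auto intro!: integrable_continuous_interval continuous_intros)
  have int_abs: "(\<lambda>s. \<bar>K' s\<bar> * S) integrable_on {a..b}" "(\<lambda>s. M * \<bar>g s\<bar>) integrable_on {a..b}"
    using cont by (auto intro!: integrable_continuous_interval continuous_intros)
  have "S \<ge> 0"
    using G_bound[of a] \<open>a \<le> b\<close> by force
  have "\<bar>integral {a..b} (\<lambda>s. K' s * G s)\<bar> \<le> integral {a..b} (\<lambda>s. \<bar>K' s\<bar> * S)"
    using integral_norm_bound_integral[OF int(1) int_abs(1)] G_bound
    by (simp add: abs_mult mult_left_mono)
  also have "\<dots> = \<bar>K b - K a\<bar> * S"
    using integral_abs_derivative_of_constant_sign[OF \<open>a \<le> b\<close> K_deriv sign] by simp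
  finally have variation: "\<bar>integral {a..b} (\<lambda>s. K' s * G s)\<bar> \<le> \<bar>K b - K a\<bar> * S" .
  have "\<bar>integral {a..b} (\<lambda>s. K s * g s)\<bar> \<le> integral {a..b} (\<lambda>s. M * \<bar>g s\<bar>)"
    using integral_norm_bound_integral[OF int(2) int_abs(2)] K_range
    by (simp add: abs_mult mult_right_mono)
  then have remainder: "\<bar>integral {a..b} (\<lambda>s. K s * g s)\<bar> \<le> M * integral {a..b} (\<lambda>s. \<bar>g s\<bar>)"
    by simp
  \<comment> \<open>boundary and variation terms add up to twice the larger endpoint value of \<open>K\<close>\<close>
  have "\<bar>K b * G b\<bar> + \<bar>K a * G a\<bar> + \<bar>K b - K a\<bar> * S \<le> (K b + K a + \<bar>K b - K a\<bar>) * S"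
  proof -
    have "\<bar>K c * G c\<bar> \<le> K c * S" if "c \<in> {a..b}" for c
      using K_range[OF that] G_bound[OF that] by (simp add: abs_mult mult_left_mono)
    from this[of a] this[of b] show ?thesis
      using \<open>a \<le> b\<close> by (simp add: algebra_simps)
  qed
  also have "\<dots> \<le> 2 * M * S"
    using K_range[of a] K_range[of b] \<open>a \<le> b\<close> \<open>S \<ge> 0\<close> by (intro mult_right_mono) auto
  finally have boundary: "\<bar>K b * G b\<bar> + \<bar>K a * G a\<bar> + \<bar>K b - K a\<bar> * S \<le> 2 * M * S" .
  show ?thesis
    using integral_mult_by_parts[OF \<open>a \<le> b\<close> K_deriv G_deriv cont] variation remainder boundary
    by (simp add: algebra_simps)
qed

lemma integrable_on_Ici_subset:
  fixes h :: "real \<Rightarrow> real"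
  assumes "h integrable_on {a..}" "a \<le> r"
  shows "h integrable_on {r..}"
proof -
  have "h integrable_on {a..r}"
    using integrable_on_subinterval[OF assms(1)] by auto
  then have "h integrable_on {a..} - {a..r}"
    using assms(1) integrable_setdiff
    by (metis integrable_on_def negligible_setdiff Icc_subset_Ici_iff order_refl)
  moreover have "{a..} - {a..r} = {r<..}"
    using assms(2) by auto
  ultimately have "h integrable_on {r<..}"
    by simp
  then show ?thesis
    by (rule integrable_spike_set) (auto intro: negligible_subset[OF negligible_sing[of r]])
qed

lemma has_integral_Ici_tendsto:
  fixes h :: "real \<Rightarrow> real"
  assumes "(h has_integral i) {a..}"
  shows "((\<lambda>T. integral {a..T} h) \<longlongrightarrow> i) at_top"
proof (rule tendstoI)
  fix e :: real assume "e > 0"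
  with assms obtain B where B: "\<And>c d. ball 0 B \<subseteq> cbox c d \<Longrightarrow>
      norm (integral (cbox c d) (\<lambda>x. if x \<in> {a..} then h x else 0) - i) < e"
    unfolding has_integral_alt'[of h i] by blast
  show "\<forall>\<^sub>F T in at_top. dist (integral {a..T} h) i < e"
  proof (rule eventually_at_top_linorderI[of "max B \<bar>a\<bar>"])
    fix T assume T: "T \<ge> max B \<bar>a\<bar>"
    then have "ball 0 B \<subseteq> cbox (- max B \<bar>a\<bar>) T"
      by (auto simp: dist_real_def)
    moreover have "{a..} \<inter> cbox (- max B \<bar>a\<bar>) T = {a..T}"
      by auto
    ultimately show "dist (integral {a..T} h) i < e"
      using B[of "- max B \<bar>a\<bar>" T] integral_restrict_Int[of "cbox (- max B \<bar>a\<bar>) T" "{a..}" h]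
      by (simp add: dist_norm)
  qed
qed

lemma mult_powr_neg_le_mult_powr:
  fixes m x :: real
  assumes "0 \<le> m" "1 \<le> x"
  shows "(1 - m) * x powr (- m) \<le> (1 + m) * x powr m"
proof -
  have "1 \<le> x powr m"
    using assms by (simp add: ge_one_powr_ge_zero)
  then have "x powr (- m) \<le> 1"
    by (simp add: powr_minus inverse_le_1_iff)
  have "(1 - m) * x powr (- m) \<le> 1 + m"
  proof (cases "m \<le> 1")
    case True
    then have "(1 - m) * x powr (- m) \<le> 1 - m"
      using \<open>x powr (- m) \<le> 1\<close> mult_left_mono[of _ 1 "1 - m"] by fastforce
    then show ?thesis
      using \<open>0 \<le> m\<close> by linarith
  next
    case False
    then have "(1 - m) * x powr (- m) \<le> 0"
      by (intro mult_nonpos_nonneg) auto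
    then show ?thesis
      using \<open>0 \<le> m\<close> by linarith
  qed
  also have "\<dots> \<le> (1 + m) * x powr m"
    using \<open>1 \<le> x powr m\<close> \<open>0 \<le> m\<close> mult_left_mono[of 1 "x powr m" "1 + m"] by simp
  finally show ?thesis .
qed

lemma smooth_on_imp_differentiable: "smooth_on g S \<Longrightarrow> x \<in> S \<Longrightarrow> g differentiable (at x)"
  unfolding smooth_on_def using funpow_0 by metis

lemma smooth_on_deriv:
  assumes "smooth_on g S"
  shows "smooth_on (deriv g) S"
  unfolding smooth_on_def
proof (intro allI ballI)
  fix k x assume "x \<in> S"
  have "(deriv ^^ k) (deriv g) = (deriv ^^ Suc k) g"
    by (simp only: funpow_Suc_right comp_apply)
  then show "(deriv ^^ k) (deriv g) differentiable (at x)"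
    using assms \<open>x \<in> S\<close> unfolding smooth_on_def by metis
qed

locale bounded_primitive_split =
  fixes G g F :: "real \<Rightarrow> real" and S :: real
  assumes G_deriv: "\<And>x. 1 \<le> x \<Longrightarrow> (G has_real_derivative g x + F x) (at x)"
    and continuous_g: "continuous_on {1..} g"
    and continuous_F: "continuous_on {1..} F"
    and G_bound: "\<And>x. 1 \<le> x \<Longrightarrow> \<bar>G x\<bar> \<le> S"
    and abs_g_integrable: "(\<lambda>s. \<bar>g s\<bar>) integrable_on {1..}"
begin

abbreviation g_L1 :: real where "g_L1 \<equiv> integral {1..} (\<lambda>s. \<bar>g s\<bar>)"

lemma g_L1_nonneg: "0 \<le> g_L1"
  using abs_g_integrable by (simp add: Henstock_Kurzweil_Integration.integral_nonneg)

lemma abs_g_integral_le: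
  assumes "1 \<le> a"
  shows "integral {a..b} (\<lambda>s. \<bar>g s\<bar>) \<le> g_L1"
proof (cases "a \<le> b")
  case True
  with assms have "{a..b} \<subseteq> {1..}"
    by auto
  then show ?thesis
    using abs_g_integrable integrable_on_subinterval[OF abs_g_integrable]
    by (intro integral_subset_le) auto
qed (use g_L1_nonneg in simp)

lemma monotone_kernel_bound:
  fixes K K' :: "real \<Rightarrow> real"
  assumes "1 \<le> a" "a \<le> b"
    and K_deriv: "\<And>x. x \<in> {a..b} \<Longrightarrow> (K has_real_derivative K' x) (at x)"
    and K'_continuous: "continuous_on {a..b} K'"
    and K'_sign: "(\<forall>x\<in>{a..b}. 0 \<le> K' x) \<or> (\<forall>x\<in>{a..b}. K' x \<le> 0)"
    and K_range: "\<And>x. x \<in> {a..b} \<Longrightarrow> 0 \<le> K x \<and> K x \<le> M"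
  shows "\<bar>integral {a..b} (\<lambda>s. K s * F s)\<bar> \<le> M * (2 * S + g_L1)"
proof -
  have sub: "{a..b} \<subseteq> {1..}"
    using \<open>1 \<le> a\<close> by auto
  have "\<bar>integral {a..b} (\<lambda>s. K s * F s)\<bar> \<le> M * (2 * S + integral {a..b} (\<lambda>s. \<bar>g s\<bar>))"
  proof (rule integral_monotone_kernel_bound[OF \<open>a \<le> b\<close> K_deriv _ K'_continuous _ _ K'_sign K_range])
    show "continuous_on {a..b} g" "continuous_on {a..b} F"
      using continuous_on_subset[OF continuous_g sub] continuous_on_subset[OF continuous_F sub] .
  qed (use sub in \<open>auto intro: G_deriv G_bound\<close>)
  also have "\<dots> \<le> M * (2 * S + g_L1)"
    using K_range[of a] \<open>a \<le> b\<close> abs_g_integral_le[OF \<open>1 \<le> a\<close>] by (intro mult_left_mono) auto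
  finally show ?thesis .
qed

lemma inner_green_integral_bound:
  assumes "0 \<le> m" "1 \<le> r"
  shows "\<bar>integral {1..r} (\<lambda>s. (s powr (1 + m) - s powr (1 - m)) / r powr m * F s)\<bar>
           \<le> r * (2 * S + g_L1)"
proof -
  define K where "K s = s powr (1 + m) - s powr (1 - m)" for s :: real
  have "\<bar>integral {1..r} (\<lambda>s. K s * F s)\<bar> \<le> r powr (1 + m) * (2 * S + g_L1)"
  proof (rule monotone_kernel_bound[where K' = "\<lambda>s. (1 + m) * s powr m - (1 - m) * s powr (- m)"])
    fix x assume x: "x \<in> {1..r}"
    then show "(K has_real_derivative (1 + m) * x powr m - (1 - m) * x powr (- m)) (at x)"
      unfolding K_def by (auto intro!: derivative_eq_intros)
    have "x powr (1 - m) \<le> x powr (1 + m)" "x powr (1 + m) \<le> r powr (1 + m)"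
      using x \<open>0 \<le> m\<close> by (auto intro: powr_mono powr_mono2)
    moreover have "0 \<le> x powr (1 - m)"
      by simp
    ultimately show "0 \<le> K x \<and> K x \<le> r powr (1 + m)"
      unfolding K_def by arith
  next
    show "(\<forall>x\<in>{1..r}. 0 \<le> (1 + m) * x powr m - (1 - m) * x powr (- m))
        \<or> (\<forall>x\<in>{1..r}. (1 + m) * x powr m - (1 - m) * x powr (- m) \<le> 0)"
      using mult_powr_neg_le_mult_powr[OF \<open>0 \<le> m\<close>] by (intro disjI1) auto
  qed (use \<open>1 \<le> r\<close> in \<open>auto intro!: continuous_intros\<close>)
  note kernel_bound = this
  have "r powr (- m) * r powr (1 + m) = r"
    using \<open>1 \<le> r\<close> by (simp flip: powr_add)
  have "\<bar>integral {1..r} (\<lambda>s. (s powr (1 + m) - s powr (1 - m)) / r powr m * F s)\<bar>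
      = r powr (- m) * \<bar>integral {1..r} (\<lambda>s. K s * F s)\<bar>"
    by (simp add: K_def powr_minus_divide abs_mult)
  also have "\<dots> \<le> r powr (- m) * (r powr (1 + m) * (2 * S + g_L1))"
    using kernel_bound by (rule mult_left_mono) simp
  also have "\<dots> = r * (2 * S + g_L1)"
    using \<open>r powr (- m) * r powr (1 + m) = r\<close> by (metis mult.assoc)
  finally show ?thesis .
qed

lemma outer_green_integral_bound:
  assumes "1 \<le> m" "1 \<le> r"
    and integrable: "(\<lambda>s. s powr (1 - m) * F s) integrable_on {1..}"
  shows "\<bar>integral {r..} (\<lambda>s. (s powr (1 - m) * r powr m - s powr (1 - m) * r powr (- m)) * F s)\<bar>
           \<le> r * (2 * S + g_L1)"
proof -
  define h where "h = (\<lambda>s. s powr (1 - m) * F s)"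
  have partial: "\<bar>integral {r..T} h\<bar> \<le> r powr (1 - m) * (2 * S + g_L1)" if "r \<le> T" for T
    unfolding h_def
  proof (rule monotone_kernel_bound[where K' = "\<lambda>s. (1 - m) * s powr (- m)"])
    fix x assume x: "x \<in> {r..T}"
    then show "((\<lambda>s. s powr (1 - m)) has_real_derivative (1 - m) * x powr (- m)) (at x)"
      using \<open>1 \<le> r\<close> by (auto intro!: derivative_eq_intros)
    show "0 \<le> x powr (1 - m) \<and> x powr (1 - m) \<le> r powr (1 - m)"
      using x \<open>1 \<le> m\<close> \<open>1 \<le> r\<close> by (auto intro: powr_mono2')
  next
    show "(\<forall>x\<in>{r..T}. 0 \<le> (1 - m) * x powr (- m)) \<or> (\<forall>x\<in>{r..T}. (1 - m) * x powr (- m) \<le> 0)"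
      using \<open>1 \<le> m\<close> by (auto intro!: disjI2 mult_nonpos_nonneg)
  qed (use \<open>1 \<le> r\<close> \<open>r \<le> T\<close> in \<open>auto intro!: continuous_intros\<close>)
  have "h integrable_on {r..}"
    using integrable_on_Ici_subset[OF integrable \<open>1 \<le> r\<close>] by (simp add: h_def)
  then have "((\<lambda>T. \<bar>integral {r..T} h\<bar>) \<longlongrightarrow> \<bar>integral {r..} h\<bar>) at_top"
    by (intro tendsto_rabs has_integral_Ici_tendsto) auto
  then have tail: "\<bar>integral {r..} h\<bar> \<le> r powr (1 - m) * (2 * S + g_L1)"
    by (rule tendsto_upperbound) (auto intro: eventually_at_top_linorderI[of r] partial)
  have "r powr m * r powr (1 - m) = r"
    using \<open>1 \<le> r\<close> by (simp flip: powr_add)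
  have "(\<lambda>s. (s powr (1 - m) * r powr m - s powr (1 - m) * r powr (- m)) * F s)
      = (\<lambda>s. (r powr m - r powr (- m)) * h s)"
    by (auto simp: h_def algebra_simps)
  moreover have "0 \<le> r powr m - r powr (- m)"
    using \<open>1 \<le> r\<close> \<open>1 \<le> m\<close> by (auto intro: powr_mono)
  ultimately have "\<bar>integral {r..} (\<lambda>s. (s powr (1 - m) * r powr m - s powr (1 - m) * r powr (- m)) * F s)\<bar>
      = (r powr m - r powr (- m)) * \<bar>integral {r..} h\<bar>"
    by (simp add: abs_mult)
  also have "\<dots> \<le> r powr m * (r powr (1 - m) * (2 * S + g_L1))"
    using \<open>0 \<le> r powr m - r powr (- m)\<close> tail by (intro mult_mono) auto
  also have "\<dots> = r * (2 * S + g_L1)"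
    using \<open>r powr m * r powr (1 - m) = r\<close> by (metis mult.assoc)
  finally show ?thesis .
qed

lemma green_phi_bound:
  assumes "n \<noteq> 0" "1 \<le> r"
    and F_eq: "F = (\<lambda>s. xi s * deriv f s)"
    and integrable: "(\<lambda>s. s powr (1 - real_of_int \<bar>n\<bar>) * F s) integrable_on {1..}"
  shows "real_of_int \<bar>n\<bar> * (\<bar>green_phi n xi f r\<bar> / r) \<le> 2 * S + g_L1"
proof -
  define m where "m = real_of_int \<bar>n\<bar>"
  have "1 \<le> m"
    using \<open>n \<noteq> 0\<close> by (simp add: m_def del: of_int_abs)
  define A where "A = integral {1..r} (\<lambda>s. (s powr (1 + m) - s powr (1 - m)) / r powr m * F s)"
  define B where "B = integral {r..} (\<lambda>s. (s powr (1 - m) * r powr m - s powr (1 - m) * r powr (- m)) * F s)"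
  have "\<bar>A\<bar> \<le> r * (2 * S + g_L1)" "\<bar>B\<bar> \<le> r * (2 * S + g_L1)"
    using inner_green_integral_bound[of m r] outer_green_integral_bound[of m r] integrable
      \<open>1 \<le> m\<close> \<open>1 \<le> r\<close> by (simp_all add: A_def B_def m_def)
  moreover have "green_phi n xi f r = - ((A + B) / (2 * m))"
    by (simp add: green_phi_def Let_def A_def B_def m_def F_eq)
  moreover have "\<bar>- ((A + B) / (2 * m))\<bar> = \<bar>A + B\<bar> / (2 * m)"
    using \<open>1 \<le> m\<close> by (simp add: abs_divide)
  ultimately have scaled: "m * \<bar>green_phi n xi f r\<bar> \<le> r * (2 * S + g_L1)"
    using \<open>1 \<le> m\<close> by (simp add: field_simps)
  have "m * (\<bar>green_phi n xi f r\<bar> / r) = m * \<bar>green_phi n xi f r\<bar> / r"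
    by simp
  also have "\<dots> \<le> r * (2 * S + g_L1) / r"
    using scaled \<open>1 \<le> r\<close> by (intro divide_right_mono) auto
  also have "\<dots> = 2 * S + g_L1"
    using \<open>1 \<le> r\<close> by simp
  finally show ?thesis
    by (simp only: m_def)
qed

end

lemma bounded_primitive_split_smooth:
  assumes "smooth_on f {1..}" "smooth_on xi {1..}"
    and bounded: "bdd_above ((\<lambda>s. \<bar>xi s * f s\<bar>) ` {1..})"
    and integrable: "(\<lambda>s. deriv xi s * f s) absolutely_integrable_on {1..}"
  shows "bounded_primitive_split (\<lambda>s. xi s * f s) (\<lambda>s. deriv xi s * f s) (\<lambda>s. xi s * deriv f s)
           (SUP s\<in>{1..}. \<bar>xi s * f s\<bar>)"
proof
  have differentiable: "f differentiable (at x)" "xi differentiable (at x)"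
      "deriv f differentiable (at x)" "deriv xi differentiable (at x)" if "1 \<le> x" for x
    using assms that by (auto intro: smooth_on_imp_differentiable smooth_on_deriv)
  show "((\<lambda>s. xi s * f s) has_real_derivative deriv xi x * f x + xi x * deriv f x) (at x)"
    if "1 \<le> x" for x
  proof -
    have "(xi has_real_derivative deriv xi x) (at x)" "(f has_real_derivative deriv f x) (at x)"
      using differentiable[OF that] by (simp_all add: DERIV_deriv_iff_real_differentiable)
    from DERIV_mult[OF this] show ?thesis
      by (simp add: algebra_simps)
  qed
  have continuous: "isCont f x" "isCont xi x" "isCont (deriv f) x" "isCont (deriv xi) x"
    if "1 \<le> x" for x
    using differentiable[OF that] by (auto intro: differentiable_imp_continuous_within)
  show "continuous_on {1..} (\<lambda>s. deriv xi s * f s)" "continuous_on {1..} (\<lambda>s. xi s * deriv f s)"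
    using continuous by (auto intro!: continuous_at_imp_continuous_on isCont_mult)
  show "\<bar>xi x * f x\<bar> \<le> (SUP s\<in>{1..}. \<bar>xi s * f s\<bar>)" if "1 \<le> x" for x
    using that by (intro cSUP_upper[OF _ bounded]) auto
  show "(\<lambda>s. \<bar>deriv xi s * f s\<bar>) integrable_on {1..}"
    using integrable by (simp add: absolutely_integrable_on_def)
qed

theorem lemma4p6:
  "\<exists>C>0. \<forall>(n::int) (f::real \<Rightarrow> real) (xi::real \<Rightarrow> real) (R::real).
     n \<noteq> 0 \<and> R > 1 \<and> smooth_on f {1..} \<and> smooth_on xi {1..}
     \<and> (\<forall>s\<in>{1..R}. xi s = 0)
     \<and> (\<lambda>s. s powr (1 - real_of_int \<bar>n\<bar>) * (xi s * deriv f s)) integrable_on {1..}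
     \<and> bdd_above ((\<lambda>s. \<bar>xi s * f s\<bar>) ` {1..})
     \<and> (\<lambda>s. deriv xi s * f s) absolutely_integrable_on {1..}
     \<longrightarrow> (\<forall>r\<ge>1. real_of_int \<bar>n\<bar> * (\<bar>green_phi n xi f r\<bar> / r)
            \<le> C * ((SUP s\<in>{1..}. \<bar>xi s * f s\<bar>) + integral {1..} (\<lambda>s. \<bar>deriv xi s * f s\<bar>)))"
proof (intro exI[of _ 2] conjI allI impI)
  fix n :: int and f xi :: "real \<Rightarrow> real" and R r :: real
  assume hyps: "n \<noteq> 0 \<and> R > 1 \<and> smooth_on f {1..} \<and> smooth_on xi {1..}
     \<and> (\<forall>s\<in>{1..R}. xi s = 0)
     \<and> (\<lambda>s. s powr (1 - real_of_int \<bar>n\<bar>) * (xi s * deriv f s)) integrable_on {1..}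
     \<and> bdd_above ((\<lambda>s. \<bar>xi s * f s\<bar>) ` {1..})
     \<and> (\<lambda>s. deriv xi s * f s) absolutely_integrable_on {1..}"
    and "1 \<le> r"
  interpret bounded_primitive_split "\<lambda>s. xi s * f s" "\<lambda>s. deriv xi s * f s" "\<lambda>s. xi s * deriv f s"
      "SUP s\<in>{1..}. \<bar>xi s * f s\<bar>"
    using hyps by (intro bounded_primitive_split_smooth) auto
  have "real_of_int \<bar>n\<bar> * (\<bar>green_phi n xi f r\<bar> / r)
      \<le> 2 * (SUP s\<in>{1..}. \<bar>xi s * f s\<bar>) + integral {1..} (\<lambda>s. \<bar>deriv xi s * f s\<bar>)"
    using hyps \<open>1 \<le> r\<close> by (intro green_phi_bound) auto
  then show "real_of_int \<bar>n\<bar> * (\<bar>green_phi n xi f r\<bar> / r)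
      \<le> 2 * ((SUP s\<in>{1..}. \<bar>xi s * f s\<bar>) + integral {1..} (\<lambda>s. \<bar>deriv xi s * f s\<bar>))"
    using g_L1_nonneg by simp
qed (simp)

end
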